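(* Let $a=(a_2,\dots,a_k)$ be nonnegative integers with $\sum_{i=2}^k ia_i=2^t$ for some $t\ge 1$. Then \[ \binom{|a|}{a}\equiv\sum_{j=1}^{\lfloor k/2\rfloor}\binom{|a|-1}{\hat a_{2j}}\pmod 2 . \]
   Context: $|a|=a_2+\dots+a_k$, $\binom{|a|}{a}=\frac{|a|!}{a_2!\cdots a_k!}$, $\hat a_j=(a_2,\dots,a_j-1,\dots,a_k)$; the multinomial coefficient of a tuple with a negative entry is defined to be $0$. *)

theory Defs
  imports Main
begin

text \<open>A tuple a = (a_2,...,a_k) of nonnegative integers is a function a :: nat => nat,
  of which only the entries at indices 2..k are used.\<close>

definition abs_tuple :: "nat \<Rightarrow> (nat \<Rightarrow> nat) \<Rightarrow> nat" where
  "abs_tuple k a = (\<Sum>i=2..k. a i)"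

definition multinom :: "nat \<Rightarrow> (nat \<Rightarrow> nat) \<Rightarrow> nat" where
  "multinom k a = fact (abs_tuple k a) div (\<Prod>i=2..k. fact (a i))"

text \<open>Multinomial coefficient of hat a_j = (a_2,...,a_j - 1,...,a_k), over the top |a| - 1;
  it is 0 when a_j = 0 (negative entry).\<close>
definition multinom_hat :: "nat \<Rightarrow> (nat \<Rightarrow> nat) \<Rightarrow> nat \<Rightarrow> nat" where
  "multinom_hat k a j =
     (if a j = 0 then 0
      else fact (abs_tuple k a - 1) div (\<Prod>i=2..k. fact ((a(j := a j - 1)) i)))"

end

theory Submission
  imports Defs
begin

text \<open>Write \<open>n = |a|\<close>, \<open>M\<close> for the multinomial coefficient and \<open>h\<^sub>j\<close> for the coefficient of
  \<open>\<hat>a\<^sub>j\<close>. Then \<open>n h\<^sub>j = a\<^sub>j M\<close>, so summing gives \<open>\<Sum> h\<^sub>j = M\<close> and \<open>n \<Sum> j h\<^sub>j = 2\<^sup>t M\<close>.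
  Since \<open>0 < 2n \<le> \<Sum> i a\<^sub>i = 2\<^sup>t\<close>, the power \<open>2\<^sup>t\<close> cannot divide \<open>n\<close>, hence \<open>\<Sum> j h\<^sub>j\<close> is
  even. Modulo 2 the odd-indexed terms of \<open>\<Sum> j h\<^sub>j\<close> and \<open>\<Sum> h\<^sub>j\<close> agree, so the odd-indexed
  \<open>h\<^sub>j\<close> sum to an even number and \<open>M \<equiv> \<Sum>\<^sub>j h\<^sub>2\<^sub>j\<close>.\<close>

lemma prod_fact_dvd_fact_sum:
  "finite S \<Longrightarrow> (\<Prod>i\<in>S. fact (f i)) dvd (fact (\<Sum>i\<in>S. f i) :: nat)"
proof (induction S rule: finite_induct)
  case empty
  then show ?case by simp
next
  case (insert x S)
  then have "fact (f x) * (\<Prod>i\<in>S. fact (f i)) dvd fact (f x) * (fact (sum f S) :: nat)"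
    by simp
  also have "\<dots> dvd fact (f x + sum f S)"
    by (rule fact_fact_dvd_fact)
  finally show ?case
    using insert by simp
qed

lemma fact_abs_tuple_eq:
  "fact (abs_tuple k a) = multinom k a * (\<Prod>i=2..k. fact (a i))"
  unfolding multinom_def abs_tuple_def
  by (simp add: prod_fact_dvd_fact_sum)

lemma multinom_hat_mult_abs_tuple:
  assumes j: "j \<in> {2..k}"
  shows "multinom_hat k a j * abs_tuple k a = multinom k a * a j"
proof (cases "a j = 0")
  case True
  then show ?thesis by (simp add: multinom_hat_def)
next
  case False
  define b where "b = a(j := a j - 1)"
  define n where "n = abs_tuple k a"
  define Q where "Q = (\<Prod>i=2..k. fact (b i) :: nat)"
  have b_off_j: "(\<Sum>i\<in>{2..k} - {j}. b i) = (\<Sum>i\<in>{2..k} - {j}. a i)"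
    "(\<Prod>i\<in>{2..k} - {j}. fact (b i)) = (\<Prod>i\<in>{2..k} - {j}. fact (a i) :: nat)"
    by (simp_all add: b_def)
  have "abs_tuple k b = abs_tuple k a - 1"
    using j False b_off_j(1) by (simp add: abs_tuple_def sum.remove[of "{2..k}" j] b_def)
  then have hat: "fact (n - 1) = multinom_hat k a j * Q"
    using False fact_abs_tuple_eq[of k b]
    by (simp add: multinom_hat_def multinom_def n_def Q_def b_def)
  have "(\<Prod>i=2..k. fact (a i)) = a j * Q"
    using j False b_off_j(2) by (simp add: Q_def prod.remove[of "{2..k}" j] fact_reduce b_def)
  then have "fact n = multinom k a * a j * Q"
    by (simp add: n_def fact_abs_tuple_eq)
  moreover have "n > 0"
    using j False member_le_sum[of j "{2..k}" a] by (simp add: n_def abs_tuple_def)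
  then have "fact n = n * fact (n - 1)"
    by (simp add: fact_reduce)
  moreover have "Q > 0"
    by (simp add: Q_def prod_pos)
  ultimately show ?thesis
    using hat by (simp add: n_def mult.commute mult.left_commute)
qed

lemma sum_multinom_hat_mult_abs_tuple:
  "(\<Sum>j=2..k. w j * multinom_hat k a j) * abs_tuple k a = multinom k a * (\<Sum>j=2..k. w j * a j)"
  by (simp add: sum_distrib_left sum_distrib_right mult.assoc multinom_hat_mult_abs_tuple)
     (simp add: mult.left_commute)

lemma double_abs_tuple_le:
  "2 * abs_tuple k a \<le> (\<Sum>i=2..k. i * a i)"
  unfolding abs_tuple_def sum_distrib_left by (rule sum_mono) simp

lemma even_if_power2_dvd:
  fixes x n :: nat
  assumes "2 ^ t dvd x * n" and "0 < n" and "n < 2 ^ t"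
  shows "even x"
proof (rule ccontr)
  assume "odd x"
  then have "coprime (2 ^ t) x"
    by (simp add: coprime_commute)
  then have "2 ^ t dvd n"
    using assms(1) coprime_dvd_mult_right_iff by blast
  then show False
    using assms(2,3) by (simp add: nat_dvd_not_less)
qed

lemma sum_mod2_eq_sum_even_indices:
  fixes f :: "nat \<Rightarrow> nat"
  assumes "finite A" and "even (\<Sum>j\<in>A. j * f j)"
  shows "sum f A mod 2 = sum f {j\<in>A. even j} mod 2"
proof -
  let ?E = "{j\<in>A. even j}" and ?O = "{j\<in>A. odd j}"
  have split: "sum g A = sum g ?E + sum g ?O" for g :: "nat \<Rightarrow> nat"
    using sum.Int_Diff[OF assms(1), of g "{j. even j}"] by (simp add: Int_def set_diff_eq)
  have "even (\<Sum>j\<in>?E. j * f j)" and "even (\<Sum>j\<in>?O. Suc j * f j)"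
    by (auto intro!: dvd_sum)
  moreover have "(\<Sum>j\<in>?O. Suc j * f j) = sum f ?O + (\<Sum>j\<in>?O. j * f j)"
    by (simp add: sum.distrib)
  ultimately have "even (sum f ?O)"
    using assms(2) split[of "\<lambda>j. j * f j"] by auto
  then show ?thesis
    using split[of f] by auto
qed

lemma even_atLeastAtMost_image_double:
  "{j\<in>{2..k::nat}. even j} = (\<lambda>j. 2 * j) ` {1..k div 2}"
  by (auto elim!: evenE)

theorem mainTheorem7:
  fixes k t :: nat and a :: "nat \<Rightarrow> nat"
  assumes "t \<ge> 1"
    and "(\<Sum>i=2..k. i * a i) = 2 ^ t"
  shows "multinom k a mod 2 = (\<Sum>j=1..k div 2. multinom_hat k a (2 * j)) mod 2"
proof -
  define n where "n = abs_tuple k a"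
  define h where "h = multinom_hat k a"
  have "n \<noteq> 0"
  proof
    assume "n = 0"
    then have "\<forall>i\<in>{2..k}. a i = 0"
      by (simp add: n_def abs_tuple_def)
    then show False
      using assms(2) by simp
  qed
  moreover have "2 * n \<le> 2 ^ t"
    using assms(2) double_abs_tuple_le[of k a] by (simp add: n_def)
  ultimately have n_bounds: "0 < n" "n < 2 ^ t"
    by auto
  have "(\<Sum>j=2..k. h j) * n = multinom k a * n"
    using sum_multinom_hat_mult_abs_tuple[of "\<lambda>_. 1" k a] by (simp add: h_def n_def abs_tuple_def)
  then have sum_h: "(\<Sum>j=2..k. h j) = multinom k a"
    using n_bounds by simp
  have "(\<Sum>j=2..k. j * h j) * n = multinom k a * 2 ^ t"
    using sum_multinom_hat_mult_abs_tuple[of id k a] assms(2) by (simp add: h_def n_def)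
  then have "even (\<Sum>j=2..k. j * h j)"
    using n_bounds by (intro even_if_power2_dvd[of t]) simp_all
  then have "multinom k a mod 2 = sum h {j\<in>{2..k}. even j} mod 2"
    using sum_h sum_mod2_eq_sum_even_indices[of "{2..k}" h] by simp
  also have "\<dots> = (\<Sum>j=1..k div 2. h (2 * j)) mod 2"
    unfolding even_atLeastAtMost_image_double by (simp add: sum.reindex inj_on_def)
  finally show ?thesis
    by (simp add: h_def)
qed

end
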